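(* In the setting of the context, suppose $\rho$ is law-invariant and the return vector $R$ has an elliptical distribution with mean vector $\mu\in\mathbb{R}^d$ with $\mu\ne r\mathbf{1}$, positive definite covariance matrix $\Sigma$ and characteristic generator $\psi$. Assume that every real random variable with distribution $E_1(\mu_X,\sigma_X^2,\psi)$, $\mu_X\in\mathbb{R}$, $\sigma_X^2\ge0$, belongs to $L$, and let $Z\sim E_1(0,1,\psi)$. Define $$\mathrm{SR}_{\max}:=\max_{\pi\in\mathbb{R}^d\setminus\{\mathbf{0}\}}\frac{\mathbb{E}[X_\pi]}{\sqrt{\operatorname{Var}(X_\pi)}}=\sqrt{(\mu-r\mathbf{1})^\top\Sigma^{-1}(\mu-r\mathbf{1})}.$$ Then: (a) if $\mathrm{SR}_{\max}<\rho(Z)$, the market does not admit $\rho$-arbitrage; (b) if $\mathrm{SR}_{\max}=\rho(Z)$, the market admits $\rho$-arbitrage but not strong $\rho$-arbitrage; (c) if $\mathrm{SR}_{\max}>\rho(Z)$, the market admits strong $\rho$-arbitrage. In particular, if $\rho(Z)\le0$, the market admits strong $\rho$-arbitrage regardless of $\mu$ and $\Sigma$. Moreover, if $\rho(Z)<0$ and $d\ge2$, then $\Pi^\rho_\nu=\emptyset$ for every $\nu\ge0$, regardless of $\mu$ and $\Sigma$.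
   Context: Let $(\Omega,\mathcal{F},\mathbb{P})$ be a probability space and a market: riskless asset $S^0_0=1$, $S^0_1=1+r$, $r>-1$; risky assets $S^1,\dots,S^d$ with constants $S^i_0>0$ and real-valued $\mathcal{F}$-measurable $S^i_1$; returns $R^i:=(S^i_1-S^i_0)/S^i_0$. Standing assumptions: nonredundancy (if $\theta\in\mathbb{R}^{1+d}$ with $\sum_{i=0}^d\theta^iS^i_t=0$ a.s. for $t\in\{0,1\}$ then $\theta=0$), $R^i\in L^1$, $\mathbb{E}[R^i]\ne r$ for some $i$. Excess return: $X_\pi:=\pi\cdot(R-r\mathbf{1})$; $\Pi_\nu:=\{\pi:\mathbb{E}[X_\pi]=\nu\}$. $L$ is a Riesz space with $L^\infty\subset L\subset L^1$ containing all $X_\pi$; $\rho:L\to(-\infty,\infty]$ is monotone, cash-invariant and positively homogeneous, and law-invariant means $\rho(X_1)=\rho(X_2)$ whenever $X_1,X_2\in L$ have the same law. $\Pi^\rho_\nu$ is the set of $\pi\in\Pi_\nu$ with $\rho(X_\pi)<\infty$ and $\rho(X_\pi)\le\rho(X_{\pi'})$ for all $\pi'\in\Pi_\nu$. A random vector $X$ in $\mathbb{R}^d$ is elliptical if its characteristic function is $t\mapsto e^{it^\top\tilde\mu}\psi(t^\top\tilde\Sigma t)$ for some $\tilde\mu\in\mathbb{R}^d$, nonnegative definite $\tilde\Sigma$ and function $\psi:[0,\infty)\to\mathbb{R}$ (the characteristic generator); if it has finite second moments it is characterised by its mean $\mu$, covariance $\Sigma$ and $\psi$, written $X\sim E_d(\mu,\Sigma,\psi)$.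 $\pi$ is $\rho$-efficient if $\mathbb{E}[X_\pi]\ge0$ and no $\pi'$ has $\mathbb{E}[X_{\pi'}]\ge\mathbb{E}[X_\pi]$, $\rho(X_{\pi'})\le\rho(X_\pi)$ with one inequality strict; $\rho$-arbitrage: no $\rho$-efficient portfolio; strong $\rho$-arbitrage: for every $\pi$ there is $\pi'$ with $\mathbb{E}[X_{\pi'}]>\mathbb{E}[X_\pi]$ and $\rho(X_{\pi'})<\rho(X_\pi)$. Here $\rho(Z)\in(-\infty,\infty]$. *)

theory Defs
  imports "HOL-Probability.Probability"
begin

definition excess_ret :: "('a \<Rightarrow> real^'d) \<Rightarrow> real \<Rightarrow> real^'d \<Rightarrow> 'a \<Rightarrow> real" where
  "excess_ret R r p = (\<lambda>\<omega>. p \<bullet> (R \<omega> - (\<chi> i. r)))"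

definition Pi_nu :: "'a measure \<Rightarrow> ('a \<Rightarrow> real^'d) \<Rightarrow> real \<Rightarrow> real \<Rightarrow> (real^'d) set" where
  "Pi_nu M R r nu = {p. integral\<^sup>L M (excess_ret R r p) = nu}"

definition Pi_rho_nu :: "'a measure \<Rightarrow> (('a \<Rightarrow> real) \<Rightarrow> ereal) \<Rightarrow> ('a \<Rightarrow> real^'d) \<Rightarrow> real \<Rightarrow> real
    \<Rightarrow> (real^'d) set" where
  "Pi_rho_nu M rho R r nu = {p \<in> Pi_nu M R r nu. rho (excess_ret R r p) < \<infinity> \<and>
      (\<forall>q \<in> Pi_nu M R r nu. rho (excess_ret R r p) \<le> rho (excess_ret R r q))}"

definition rho_efficient :: "'a measure \<Rightarrow> (('a \<Rightarrow> real) \<Rightarrow> ereal) \<Rightarrow> ('a \<Rightarrow> real^'d) \<Rightarrow> real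
    \<Rightarrow> real^'d \<Rightarrow> bool" where
  "rho_efficient M rho R r p \<longleftrightarrow>
     integral\<^sup>L M (excess_ret R r p) \<ge> 0 \<and>
     \<not> (\<exists>q. integral\<^sup>L M (excess_ret R r q) \<ge> integral\<^sup>L M (excess_ret R r p) \<and>
             rho (excess_ret R r q) \<le> rho (excess_ret R r p) \<and>
             (integral\<^sup>L M (excess_ret R r q) > integral\<^sup>L M (excess_ret R r p) \<or>
              rho (excess_ret R r q) < rho (excess_ret R r p)))"

definition rho_arbitrage :: "'a measure \<Rightarrow> (('a \<Rightarrow> real) \<Rightarrow> ereal) \<Rightarrow> ('a \<Rightarrow> real^'d) \<Rightarrow> real \<Rightarrow> bool" where
  "rho_arbitrage M rho R r \<longleftrightarrow> \<not> (\<exists>p. rho_efficient M rho R r p)"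

definition strong_rho_arbitrage :: "'a measure \<Rightarrow> (('a \<Rightarrow> real) \<Rightarrow> ereal) \<Rightarrow> ('a \<Rightarrow> real^'d) \<Rightarrow> real \<Rightarrow> bool" where
  "strong_rho_arbitrage M rho R r \<longleftrightarrow>
     (\<forall>p. \<exists>q. integral\<^sup>L M (excess_ret R r q) > integral\<^sup>L M (excess_ret R r p) \<and>
                 rho (excess_ret R r q) < rho (excess_ret R r p))"

definition elliptical_Ed :: "'a measure \<Rightarrow> ('a \<Rightarrow> real^'d) \<Rightarrow> real^'d \<Rightarrow> real^'d^'d \<Rightarrow> (real \<Rightarrow> real) \<Rightarrow> bool" where
  "elliptical_Ed M X mu Sig psi \<longleftrightarrow>
     X \<in> borel_measurable M \<and>
     (\<forall>i. integrable M (\<lambda>\<omega>. (X \<omega> $ i)\<^sup>2)) \<and>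
     (\<forall>i. integral\<^sup>L M (\<lambda>\<omega>. X \<omega> $ i) = mu $ i) \<and>
     (\<forall>i j. integral\<^sup>L M (\<lambda>\<omega>. (X \<omega> $ i - mu $ i) * (X \<omega> $ j - mu $ j)) = Sig $ i $ j) \<and>
     (\<forall>t. integral\<^sup>L M (\<lambda>\<omega>. iexp (t \<bullet> X \<omega>)) =
            iexp (t \<bullet> mu) * complex_of_real (psi (t \<bullet> (Sig *v t))))"

definition elliptical_E1 :: "'a measure \<Rightarrow> ('a \<Rightarrow> real) \<Rightarrow> real \<Rightarrow> real \<Rightarrow> (real \<Rightarrow> real) \<Rightarrow> bool" where
  "elliptical_E1 M X m v psi \<longleftrightarrow>
     X \<in> borel_measurable M \<and>
     integrable M (\<lambda>\<omega>. (X \<omega>)\<^sup>2) \<and>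
     integral\<^sup>L M X = m \<and>
     integral\<^sup>L M (\<lambda>\<omega>. (X \<omega> - m)\<^sup>2) = v \<and>
     (\<forall>t. integral\<^sup>L M (\<lambda>\<omega>. iexp (t * X \<omega>)) =
            iexp (t * m) * complex_of_real (psi (t\<^sup>2 * v)))"

definition pos_def :: "real^'d^'d \<Rightarrow> bool" where
  "pos_def A \<longleftrightarrow> transpose A = A \<and> (\<forall>x. x \<noteq> 0 \<longrightarrow> x \<bullet> (A *v x) > 0)"

definition SR_max :: "real^'d \<Rightarrow> real^'d^'d \<Rightarrow> real \<Rightarrow> real" where
  "SR_max mu Sig r = sqrt ((mu - (\<chi> i. r)) \<bullet> (matrix_inv Sig *v (mu - (\<chi> i. r))))"

end

theory Submission
  imports Defs
begin

text \<open>
  For an elliptical return vector every excess return X(\<pi>) has the law of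
  \<sigma>(\<pi>) Z + E[X(\<pi>)] with \<sigma>(\<pi>) = sqrt (\<pi> \<bullet> \<Sigma> \<pi>), as the characteristic functions show.
  Law invariance, cash invariance and positive homogeneity therefore give
  \<rho>(X(\<pi>)) = \<sigma>(\<pi>) \<rho>(Z) - E[X(\<pi>)]. By Cauchy--Schwarz for the inner product of \<Sigma>,
  E[X(\<pi>)] \<le> \<sigma>(\<pi>) SR_max, with equality along the tangency portfolio \<Sigma>\<inverse>(\<mu> - r 1).
  Hence the risk is bounded below by \<sigma>(\<pi>) (\<rho>(Z) - SR_max), and the sign of \<rho>(Z) - SR_max
  decides whether shifting a portfolio along the tangency direction raises its mean while
  lowering its risk. If \<rho>(Z) < 0 and d \<ge> 2, shifting along a nonzero direction of zero mean
  excess return keeps the mean and sends \<sigma>, hence -\<rho>, to infinity, so no minimiser exists.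
\<close>

definition quad_norm :: "real^'n^'n \<Rightarrow> real^'n \<Rightarrow> real" where
  "quad_norm S x = sqrt (x \<bullet> (S *v x))"

lemma pos_def_inner_commute:
  assumes "pos_def S"
  shows "x \<bullet> (S *v y) = y \<bullet> (S *v x)"
  using assms unfolding pos_def_def
  by (metis dot_lmul_matrix inner_commute transpose_matrix_vector)

lemma pos_def_nonneg:
  assumes "pos_def S"
  shows "0 \<le> x \<bullet> (S *v x)"
  using assms unfolding pos_def_def by (cases "x = 0") (auto intro: less_imp_le)

lemma pos_def_quadratic_add:
  assumes "pos_def S"
  shows "(x + y) \<bullet> (S *v (x + y)) = x \<bullet> (S *v x) + 2 * (x \<bullet> (S *v y)) + y \<bullet> (S *v y)"
  using pos_def_inner_commute[OF assms, of y x]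
  by (simp add: matrix_vector_right_distrib inner_add_left inner_add_right)

lemma pos_def_Cauchy_Schwarz:
  assumes "pos_def S"
  shows "(x \<bullet> (S *v y))\<^sup>2 \<le> (x \<bullet> (S *v x)) * (y \<bullet> (S *v y))"
proof (cases "y = 0")
  case False
  then have pos: "y \<bullet> (S *v y) > 0"
    using assms by (simp add: pos_def_def)
  define t where "t = - (x \<bullet> (S *v y)) / (y \<bullet> (S *v y))"
  have "0 \<le> (x + t *\<^sub>R y) \<bullet> (S *v (x + t *\<^sub>R y))"
    by (rule pos_def_nonneg[OF assms])
  also have "\<dots> = x \<bullet> (S *v x) + 2 * t * (x \<bullet> (S *v y)) + t\<^sup>2 * (y \<bullet> (S *v y))"
    by (simp only: pos_def_quadratic_add[OF assms]) (simp add: matrix_vector_mult_scaleR power2_eq_square)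
  also have "\<dots> = x \<bullet> (S *v x) - (x \<bullet> (S *v y))\<^sup>2 / (y \<bullet> (S *v y))"
    using pos by (simp add: t_def field_simps power2_eq_square)
  finally show ?thesis
    using pos by (simp add: field_simps)
qed simp

lemma quad_norm_zero [simp]: "quad_norm S 0 = 0"
  by (simp add: quad_norm_def)

lemma quad_norm_nonneg: "pos_def S \<Longrightarrow> 0 \<le> quad_norm S x"
  by (simp add: quad_norm_def pos_def_nonneg)

lemma quad_norm_pos: "pos_def S \<Longrightarrow> x \<noteq> 0 \<Longrightarrow> 0 < quad_norm S x"
  by (simp add: quad_norm_def pos_def_def)

lemma quad_norm_scaleR: "quad_norm S (c *\<^sub>R x) = \<bar>c\<bar> * quad_norm S x"
proof -
  have "(c *\<^sub>R x) \<bullet> (S *v (c *\<^sub>R x)) = c\<^sup>2 * (x \<bullet> (S *v x))"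
    by (simp add: matrix_vector_mult_scaleR power2_eq_square)
  then show ?thesis
    by (simp add: quad_norm_def real_sqrt_mult)
qed

lemma abs_inner_pos_def_le:
  assumes "pos_def S"
  shows "\<bar>x \<bullet> (S *v y)\<bar> \<le> quad_norm S x * quad_norm S y"
  using real_sqrt_le_mono[OF pos_def_Cauchy_Schwarz[OF assms, of x y]]
  by (simp add: quad_norm_def real_sqrt_mult)

lemma quad_norm_triangle:
  assumes "pos_def S"
  shows "quad_norm S (x + y) \<le> quad_norm S x + quad_norm S y"
proof -
  have "(x + y) \<bullet> (S *v (x + y))
      \<le> (quad_norm S x)\<^sup>2 + 2 * (quad_norm S x * quad_norm S y) + (quad_norm S y)\<^sup>2"
    using abs_inner_pos_def_le[OF assms, of x y] pos_def_nonneg[OF assms]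
    by (simp add: pos_def_quadratic_add[OF assms] quad_norm_def)
  also have "\<dots> = (quad_norm S x + quad_norm S y)\<^sup>2"
    by (simp add: power2_sum)
  finally show ?thesis
    using quad_norm_nonneg[OF assms] by (simp add: quad_norm_def real_le_lsqrt)
qed

lemma quad_norm_diff_le:
  assumes "pos_def S"
  shows "quad_norm S y - quad_norm S x \<le> quad_norm S (x + y)"
  using quad_norm_triangle[OF assms, of "x + y" "(-1) *\<^sub>R x"] quad_norm_scaleR[of S "-1" x]
  by simp

lemma pos_def_matrix_inv:
  assumes "pos_def S"
  shows "S *v (matrix_inv S *v y) = y"
proof -
  have "\<forall>x. S *v x = 0 \<longrightarrow> x = 0"
    using assms by (metis inner_zero_right less_irrefl pos_def_def)
  then have "invertible S"
    using invertible_left_inverse matrix_left_invertible_ker by blast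
  then have "S ** matrix_inv S = mat 1"
    unfolding invertible_def matrix_inv_def
    by (rule someI_ex[where P = "\<lambda>A'. S ** A' = mat 1 \<and> A' ** S = mat 1", THEN conjunct1])
  then show ?thesis
    by (simp add: matrix_vector_mul_assoc)
qed

lemma exists_nonzero_orthogonal:
  fixes a :: "real^'n"
  assumes "2 \<le> CARD('n)"
  obtains v where "v \<noteq> 0" "v \<bullet> a = 0"
  using orthogonal_to_vector_exists[of a] assms
  by (metis DIM_cart DIM_real mult.right_neutral orthogonal_def inner_commute)

lemma integral_excess_ret:
  assumes "prob_space M"
    and "\<forall>i. integrable M (\<lambda>\<omega>. R \<omega> $ i)"
    and "\<forall>i. integral\<^sup>L M (\<lambda>\<omega>. R \<omega> $ i) = mu $ i"
  shows "integral\<^sup>L M (excess_ret R r p) = p \<bullet> (mu - (\<chi> i. r))"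
proof -
  interpret prob_space M by (rule assms(1))
  have "integral\<^sup>L M (excess_ret R r p) = integral\<^sup>L M (\<lambda>\<omega>. \<Sum>i\<in>UNIV. p $ i * (R \<omega> $ i - r))"
    by (simp add: excess_ret_def inner_vec_def)
  also have "\<dots> = (\<Sum>i\<in>UNIV. integral\<^sup>L M (\<lambda>\<omega>. p $ i * (R \<omega> $ i - r)))"
    by (rule Bochner_Integration.integral_sum) (use assms(2) in auto)
  also have "\<dots> = p \<bullet> (mu - (\<chi> i. r))"
    using assms by (simp add: inner_vec_def prob_space)
  finally show ?thesis .
qed

lemma char_excess_ret_elliptical:
  assumes "elliptical_Ed M R mu Sig psi"
  shows "char (distr M borel (excess_ret R r p)) t =
    iexp (t * (p \<bullet> (mu - (\<chi> i. r)))) * complex_of_real (psi (t\<^sup>2 * (p \<bullet> (Sig *v p))))"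
proof -
  have [measurable]: "R \<in> borel_measurable M"
    using assms by (simp add: elliptical_Ed_def)
  have "char (distr M borel (excess_ret R r p)) t
      = (CLINT \<omega>|M. iexp (- (t * (p \<bullet> (\<chi> i. r)))) * iexp ((t *\<^sub>R p) \<bullet> R \<omega>))"
    by (auto simp: char_def integral_distr excess_ret_def algebra_simps
        simp flip: exp_add intro!: Bochner_Integration.integral_cong)
  also have "\<dots> = iexp (- (t * (p \<bullet> (\<chi> i. r)))) * (CLINT \<omega>|M. iexp ((t *\<^sub>R p) \<bullet> R \<omega>))"
    by (rule integral_mult_right_zero)
  also have "\<dots> = iexp (- (t * (p \<bullet> (\<chi> i. r)))) * iexp ((t *\<^sub>R p) \<bullet> mu)
      * complex_of_real (psi (t\<^sup>2 * (p \<bullet> (Sig *v p))))"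
  proof -
    have "(t *\<^sub>R p) \<bullet> (Sig *v (t *\<^sub>R p)) = t\<^sup>2 * (p \<bullet> (Sig *v p))"
      by (simp add: matrix_vector_mult_scaleR power2_eq_square)
    then show ?thesis
      using assms by (simp only: elliptical_Ed_def mult.assoc)
  qed
  also have "\<dots> = iexp (t * (p \<bullet> (mu - (\<chi> i. r)))) * complex_of_real (psi (t\<^sup>2 * (p \<bullet> (Sig *v p))))"
    by (simp add: algebra_simps flip: exp_add)
  finally show ?thesis .
qed

lemma char_affine_elliptical:
  assumes "elliptical_E1 M Z 0 1 psi"
  shows "char (distr M borel (\<lambda>\<omega>. s * Z \<omega> + m)) t = iexp (t * m) * complex_of_real (psi ((t * s)\<^sup>2))"
proof -
  have [measurable]: "Z \<in> borel_measurable M"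
    and char_Z: "\<And>u. (CLINT \<omega>|M. iexp (u * Z \<omega>)) = complex_of_real (psi (u\<^sup>2))"
    using assms by (simp_all add: elliptical_E1_def)
  have "char (distr M borel (\<lambda>\<omega>. s * Z \<omega> + m)) t = (CLINT \<omega>|M. iexp (t * m) * iexp ((t * s) * Z \<omega>))"
    by (auto simp: char_def integral_distr algebra_simps simp flip: exp_add
        intro!: Bochner_Integration.integral_cong)
  also have "\<dots> = iexp (t * m) * (CLINT \<omega>|M. iexp ((t * s) * Z \<omega>))"
    by (rule integral_mult_right_zero)
  also have "\<dots> = iexp (t * m) * complex_of_real (psi ((t * s)\<^sup>2))"
    by (simp only: char_Z)
  finally show ?thesis .
qed

lemma distr_excess_ret_elliptical:
  assumes "prob_space M" "elliptical_Ed M R mu Sig psi" "elliptical_E1 M Z 0 1 psi" "pos_def Sig"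
  shows "distr M borel (excess_ret R r p) =
    distr M borel (\<lambda>\<omega>. quad_norm Sig p * Z \<omega> + p \<bullet> (mu - (\<chi> i. r)))"
proof (rule Levy_uniqueness)
  interpret prob_space M by (rule assms(1))
  have [measurable]: "R \<in> borel_measurable M" "Z \<in> borel_measurable M"
    using assms(2,3) by (simp_all add: elliptical_Ed_def elliptical_E1_def)
  show "real_distribution (distr M borel (excess_ret R r p))"
    by (rule real_distribution_distr) (simp add: excess_ret_def)
  show "real_distribution (distr M borel (\<lambda>\<omega>. quad_norm Sig p * Z \<omega> + p \<bullet> (mu - (\<chi> i. r))))"
    by (rule real_distribution_distr) simp
  have "(t * quad_norm Sig p)\<^sup>2 = t\<^sup>2 * (p \<bullet> (Sig *v p))" for t
    using pos_def_nonneg[OF assms(4)] by (simp add: quad_norm_def power_mult_distrib)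
  then show "char (distr M borel (excess_ret R r p)) =
      char (distr M borel (\<lambda>\<omega>. quad_norm Sig p * Z \<omega> + p \<bullet> (mu - (\<chi> i. r))))"
    by (simp add: fun_eq_iff char_excess_ret_elliptical[OF assms(2)] char_affine_elliptical[OF assms(3)])
qed

lemma rho_excess_ret_elliptical:
  assumes "prob_space M" "elliptical_Ed M R mu Sig psi" "elliptical_E1 M Z 0 1 psi" "pos_def Sig"
    and Z_in_L: "Z \<in> L"
    and L_bdd: "\<forall>X. X \<in> borel_measurable M \<and> (\<exists>B. \<forall>\<omega>\<in>space M. \<bar>X \<omega>\<bar> \<le> B) \<longrightarrow> X \<in> L"
    and L_add: "\<forall>X\<in>L. \<forall>Y\<in>L. (\<lambda>\<omega>. X \<omega> + Y \<omega>) \<in> L"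
    and L_scale: "\<forall>X\<in>L. \<forall>c::real. (\<lambda>\<omega>. c * X \<omega>) \<in> L"
    and L_X: "\<forall>p. excess_ret R r p \<in> L"
    and rho_cash: "\<forall>X\<in>L. \<forall>c::real. rho (\<lambda>\<omega>. X \<omega> + c) = rho X - ereal c"
    and rho_hom: "\<forall>X\<in>L. \<forall>c::real. c \<ge> 0 \<longrightarrow> rho (\<lambda>\<omega>. c * X \<omega>) = ereal c * rho X"
    and rho_law: "\<forall>X\<in>L. \<forall>Y\<in>L. distr M borel X = distr M borel Y \<longrightarrow> rho X = rho Y"
  shows "rho (excess_ret R r p) = ereal (quad_norm Sig p) * rho Z - ereal (p \<bullet> (mu - (\<chi> i. r)))"
proof -
  define s where "s = quad_norm Sig p"
  define m where "m = p \<bullet> (mu - (\<chi> i. r))"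
  have sZ_in_L: "(\<lambda>\<omega>. s * Z \<omega>) \<in> L"
    using L_scale Z_in_L by blast
  have "(\<lambda>\<omega>. m) \<in> L"
    using L_bdd[rule_format, of "\<lambda>\<omega>. m"] by auto
  then have Y_in_L: "(\<lambda>\<omega>. s * Z \<omega> + m) \<in> L"
    using L_add[rule_format, OF sZ_in_L] by simp
  have "distr M borel (excess_ret R r p) = distr M borel (\<lambda>\<omega>. s * Z \<omega> + m)"
    unfolding s_def m_def by (rule distr_excess_ret_elliptical[OF assms(1-4)])
  then have "rho (excess_ret R r p) = rho (\<lambda>\<omega>. s * Z \<omega> + m)"
    using rho_law L_X Y_in_L by blast
  also have "\<dots> = rho (\<lambda>\<omega>. s * Z \<omega>) - ereal m"
    using rho_cash[rule_format, OF sZ_in_L, of m] by simp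
  also have "\<dots> = ereal s * rho Z - ereal m"
    using rho_hom[rule_format, OF Z_in_L, of s] quad_norm_nonneg[OF assms(4)] by (simp add: s_def)
  finally show ?thesis
    by (simp add: s_def m_def)
qed

locale elliptical_risk_market =
  fixes M :: "'a measure" and rho :: "('a \<Rightarrow> real) \<Rightarrow> ereal" and R :: "'a \<Rightarrow> real^'d"
    and r :: real and mu :: "real^'d" and Sig :: "real^'d^'d" and z :: ereal
  assumes pos_def_Sig: "pos_def Sig"
    and mu_neq: "mu \<noteq> (\<chi> i. r)"
    and z_neq_minf: "z \<noteq> -\<infinity>"
    and mean_excess_ret: "integral\<^sup>L M (excess_ret R r p) = p \<bullet> (mu - (\<chi> i. r))"
    and rho_excess_ret:
      "rho (excess_ret R r p) = ereal (quad_norm Sig p) * z - ereal (p \<bullet> (mu - (\<chi> i. r)))"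
begin

text \<open>
  In the application z is \<rho>(Z). At the zero portfolio the product is ereal 0 * z = 0 even
  for z = \<infinity>, in accordance with \<rho>(0) = 0 from positive homogeneity.
\<close>

abbreviation excess_mean :: "real^'d" where
  "excess_mean \<equiv> mu - (\<chi> i. r)"

abbreviation SR :: real where
  "SR \<equiv> SR_max mu Sig r"

definition tangency :: "real^'d" where
  "tangency = matrix_inv Sig *v excess_mean"

lemma Sig_tangency: "Sig *v tangency = excess_mean"
  by (simp add: tangency_def pos_def_matrix_inv[OF pos_def_Sig])

lemma quad_norm_tangency: "quad_norm Sig tangency = SR"
  unfolding quad_norm_def SR_max_def Sig_tangency by (simp add: inner_commute tangency_def)

lemma SR_pos: "0 < SR"
proof -
  have "tangency \<noteq> 0"
    using Sig_tangency mu_neq by auto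
  then show ?thesis
    using quad_norm_pos[OF pos_def_Sig] quad_norm_tangency by metis
qed

lemma tangency_excess_mean: "tangency \<bullet> excess_mean = SR\<^sup>2"
proof -
  have "tangency \<bullet> excess_mean = (quad_norm Sig tangency)\<^sup>2"
    using pos_def_nonneg[OF pos_def_Sig, of tangency] by (simp add: quad_norm_def Sig_tangency)
  then show ?thesis
    by (simp only: quad_norm_tangency)
qed

lemma excess_mean_le_SR: "p \<bullet> excess_mean \<le> quad_norm Sig p * SR"
  using abs_inner_pos_def_le[OF pos_def_Sig, of p tangency]
  by (simp add: Sig_tangency quad_norm_tangency)

lemma rho_excess_ret_real:
  "z = ereal c \<Longrightarrow> rho (excess_ret R r p) = ereal (quad_norm Sig p * c - p \<bullet> excess_mean)"
  by (simp add: rho_excess_ret)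

lemma rho_excess_ret_zero: "rho (excess_ret R r 0) = 0"
  by (simp add: rho_excess_ret)

lemma rho_excess_ret_pos:
  assumes "ereal SR < z" "p \<noteq> 0"
  shows "0 < rho (excess_ret R r p)"
proof (cases z)
  case (real c)
  have "0 < quad_norm Sig p * (c - SR)"
    using assms real quad_norm_pos[OF pos_def_Sig] by simp
  also have "\<dots> \<le> quad_norm Sig p * c - p \<bullet> excess_mean"
    using excess_mean_le_SR[of p] by (simp add: algebra_simps)
  finally show ?thesis
    by (simp add: rho_excess_ret_real[OF real])
next
  case PInf
  then show ?thesis
    using quad_norm_pos[OF pos_def_Sig assms(2)] by (simp add: rho_excess_ret)
qed (use z_neq_minf in simp)

lemma not_rho_arbitrage_if_SR_less:
  assumes "ereal SR < z"
  shows "\<not> rho_arbitrage M rho R r"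
proof -
  have "\<not> (0 \<le> q \<bullet> excess_mean \<and> rho (excess_ret R r q) \<le> 0 \<and>
      (0 < q \<bullet> excess_mean \<or> rho (excess_ret R r q) < 0))" for q
    using rho_excess_ret_pos[OF assms, of q] by (cases "q = 0") (auto simp: rho_excess_ret_zero)
  then have "rho_efficient M rho R r 0"
    by (simp add: rho_efficient_def mean_excess_ret rho_excess_ret_zero)
  then show ?thesis
    by (auto simp: rho_arbitrage_def)
qed

lemma rho_excess_ret_nonneg:
  assumes "ereal SR = z"
  shows "0 \<le> rho (excess_ret R r p)"
  using excess_mean_le_SR[of p] by (simp add: rho_excess_ret_real[OF assms[symmetric]])

lemma rho_arbitrage_if_SR_eq:
  assumes "ereal SR = z"
  shows "rho_arbitrage M rho R r"
  unfolding rho_arbitrage_def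
proof
  assume "\<exists>p. rho_efficient M rho R r p"
  then obtain p where p: "rho_efficient M rho R r p" ..
  define t where "t = (p \<bullet> excess_mean + 1) / SR\<^sup>2"
  have "0 \<le> p \<bullet> excess_mean"
    using p by (simp add: rho_efficient_def mean_excess_ret)
  then have t_pos: "0 < t"
    using SR_pos by (simp add: t_def)
  have mean_q: "(t *\<^sub>R tangency) \<bullet> excess_mean = p \<bullet> excess_mean + 1"
    using SR_pos by (simp add: t_def tangency_excess_mean)
  have "rho (excess_ret R r (t *\<^sub>R tangency)) = 0"
    using t_pos mean_q
    by (simp add: rho_excess_ret_real[OF assms[symmetric]] quad_norm_scaleR quad_norm_tangency
        tangency_excess_mean power2_eq_square)
  then show False
    using p mean_q rho_excess_ret_nonneg[OF assms, of p]
    unfolding rho_efficient_def mean_excess_ret by (metis less_add_one order_less_imp_le)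
qed

lemma not_strong_rho_arbitrage_if_SR_eq:
  assumes "ereal SR = z"
  shows "\<not> strong_rho_arbitrage M rho R r"
  unfolding strong_rho_arbitrage_def
  using rho_excess_ret_nonneg[OF assms] rho_excess_ret_zero by (metis not_less)

lemma strong_rho_arbitrage_if_SR_greater:
  assumes "z < ereal SR"
  shows "strong_rho_arbitrage M rho R r"
proof -
  obtain c where c: "z = ereal c" "c < SR"
    using assms z_neq_minf by (cases z) auto
  have "\<exists>q. p \<bullet> excess_mean < q \<bullet> excess_mean \<and>
      quad_norm Sig q * c - q \<bullet> excess_mean < quad_norm Sig p * c - p \<bullet> excess_mean" for p
  proof (cases "0 \<le> c")
    case True
    define q where "q = p + tangency"
    have "quad_norm Sig q * c \<le> (quad_norm Sig p + SR) * c"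
      using True quad_norm_triangle[OF pos_def_Sig, of p tangency]
      by (simp add: q_def quad_norm_tangency mult_right_mono)
    moreover have "q \<bullet> excess_mean = p \<bullet> excess_mean + SR\<^sup>2"
      by (simp add: q_def inner_add_left tangency_excess_mean)
    moreover have "SR * c < SR\<^sup>2"
      using SR_pos c by (simp add: power2_eq_square)
    ultimately show ?thesis
      using SR_pos by (intro exI[of _ q]) (auto simp: algebra_simps)
  next
    case False
    \<comment> \<open>for c < 0 the risk is at most minus the mean, so raising the mean enough suffices\<close>
    define q where "q = p + ((1 - quad_norm Sig p * c) / SR\<^sup>2) *\<^sub>R tangency"
    have "q \<bullet> excess_mean = p \<bullet> excess_mean + (1 - quad_norm Sig p * c)"
      using SR_pos by (simp add: q_def inner_add_left tangency_excess_mean)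
    moreover have "quad_norm Sig q * c \<le> 0" "quad_norm Sig p * c \<le> 0"
      using False quad_norm_nonneg[OF pos_def_Sig] by (simp_all add: mult_nonneg_nonpos)
    ultimately show ?thesis
      by (intro exI[of _ q]) auto
  qed
  then show ?thesis
    by (simp add: strong_rho_arbitrage_def mean_excess_ret rho_excess_ret_real[OF c(1)])
qed

lemma Pi_rho_nu_empty_if_negative:
  assumes "z < 0" "2 \<le> CARD('d)"
  shows "Pi_rho_nu M rho R r nu = {}"
proof (rule equals0I)
  fix p
  assume p: "p \<in> Pi_rho_nu M rho R r nu"
  obtain c where c: "z = ereal c" "c < 0"
    using assms z_neq_minf by (cases z) auto
  obtain v where v: "v \<noteq> 0" "v \<bullet> excess_mean = 0"
    using exists_nonzero_orthogonal[OF assms(2)] by blast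
  define t where "t = (2 * quad_norm Sig p + 1) / quad_norm Sig v"
  define q where "q = p + t *\<^sub>R v"
  have "quad_norm Sig (t *\<^sub>R v) = 2 * quad_norm Sig p + 1"
    using quad_norm_pos[OF pos_def_Sig v(1)] quad_norm_nonneg[OF pos_def_Sig, of p]
    by (simp add: t_def quad_norm_scaleR)
  then have "quad_norm Sig p < quad_norm Sig q"
    using quad_norm_diff_le[OF pos_def_Sig, of "t *\<^sub>R v" p] by (simp add: q_def)
  moreover have mean_q: "q \<bullet> excess_mean = p \<bullet> excess_mean"
    using v(2) by (simp add: q_def inner_add_left)
  ultimately have "rho (excess_ret R r q) < rho (excess_ret R r p)"
    using c by (simp add: rho_excess_ret_real)
  moreover have "q \<in> Pi_nu M R r nu"
    using p mean_q by (simp add: Pi_rho_nu_def Pi_nu_def mean_excess_ret)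
  ultimately show False
    using p by (auto simp: Pi_rho_nu_def not_le)
qed

end

theorem corollary3p28:
  fixes M :: "'a measure" and r :: real
    and S0 :: "real^'d" and S1 :: "'a \<Rightarrow> real^'d" and R :: "'a \<Rightarrow> real^'d"
    and L :: "('a \<Rightarrow> real) set" and rho :: "('a \<Rightarrow> real) \<Rightarrow> ereal"
    and mu :: "real^'d" and Sig :: "real^'d^'d" and psi :: "real \<Rightarrow> real"
    and Z :: "'a \<Rightarrow> real"
  assumes P: "prob_space M"
    and r_gt: "r > -1"
    and S0_pos: "\<forall>i. S0 $ i > 0"
    and S1_meas: "S1 \<in> borel_measurable M"
    and R_def: "\<forall>\<omega>. \<forall>i. R \<omega> $ i = (S1 \<omega> $ i - S0 $ i) / S0 $ i"
    and nonredundant: "\<forall>th0 (th :: real^'d).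
          (th0 + th \<bullet> S0 = 0 \<and> (AE \<omega> in M. th0 * (1 + r) + th \<bullet> S1 \<omega> = 0))
          \<longrightarrow> th0 = 0 \<and> th = 0"
    and R_int: "\<forall>i. integrable M (\<lambda>\<omega>. R \<omega> $ i)"
    and mean_ne: "\<exists>i. integral\<^sup>L M (\<lambda>\<omega>. R \<omega> $ i) \<noteq> r"
    \<comment> \<open>L is a Riesz space with L^infinity \<subseteq> L \<subseteq> L^1 containing all excess returns\<close>
    and L_int: "\<forall>X\<in>L. integrable M X"
    and L_bdd: "\<forall>X. X \<in> borel_measurable M \<and> (\<exists>B. \<forall>\<omega>\<in>space M. \<bar>X \<omega>\<bar> \<le> B) \<longrightarrow> X \<in> L"
    and L_add: "\<forall>X\<in>L. \<forall>Y\<in>L. (\<lambda>\<omega>. X \<omega> + Y \<omega>) \<in> L"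
    and L_scale: "\<forall>X\<in>L. \<forall>c::real. (\<lambda>\<omega>. c * X \<omega>) \<in> L"
    and L_max: "\<forall>X\<in>L. \<forall>Y\<in>L. (\<lambda>\<omega>. max (X \<omega>) (Y \<omega>)) \<in> L"
    and L_X: "\<forall>p. excess_ret R r p \<in> L"
    \<comment> \<open>rho : L \<rightarrow> (-\<infinity>, \<infinity>], monotone, cash-invariant, positively homogeneous, law-invariant\<close>
    and rho_fin: "\<forall>X\<in>L. rho X \<noteq> -\<infinity>"
    and rho_mono: "\<forall>X\<in>L. \<forall>Y\<in>L. (AE \<omega> in M. X \<omega> \<le> Y \<omega>) \<longrightarrow> rho Y \<le> rho X"
    and rho_cash: "\<forall>X\<in>L. \<forall>c::real. rho (\<lambda>\<omega>. X \<omega> + c) = rho X - ereal c"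
    and rho_hom: "\<forall>X\<in>L. \<forall>c::real. c \<ge> 0 \<longrightarrow> rho (\<lambda>\<omega>. c * X \<omega>) = ereal c * rho X"
    and rho_law: "\<forall>X\<in>L. \<forall>Y\<in>L. distr M borel X = distr M borel Y \<longrightarrow> rho X = rho Y"
    \<comment> \<open>elliptical returns\<close>
    and R_ell: "elliptical_Ed M R mu Sig psi"
    and mu_ne: "mu \<noteq> (\<chi> i. r)"
    and Sigma_pd: "pos_def Sig"
    and L_ell: "\<forall>X m v. v \<ge> 0 \<and> elliptical_E1 M X m v psi \<longrightarrow> X \<in> L"
    and Z_ell: "elliptical_E1 M Z 0 1 psi"
  shows "(ereal (SR_max mu Sig r) < rho Z \<longrightarrow> \<not> rho_arbitrage M rho R r)
    \<and> (ereal (SR_max mu Sig r) = rho Z \<longrightarrow>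
          rho_arbitrage M rho R r \<and> \<not> strong_rho_arbitrage M rho R r)
    \<and> (ereal (SR_max mu Sig r) > rho Z \<longrightarrow> strong_rho_arbitrage M rho R r)
    \<and> (rho Z \<le> 0 \<longrightarrow> strong_rho_arbitrage M rho R r)
    \<and> (rho Z < 0 \<and> CARD('d) \<ge> 2 \<longrightarrow> (\<forall>nu \<ge> 0. Pi_rho_nu M rho R r nu = {}))"
proof -
  have Z_in_L: "Z \<in> L"
    using L_ell[rule_format, of 1 Z 0] Z_ell by simp
  have means: "\<forall>i. integral\<^sup>L M (\<lambda>\<omega>. R \<omega> $ i) = mu $ i"
    using R_ell by (simp add: elliptical_Ed_def)
  interpret elliptical_risk_market M rho R r mu Sig "rho Z"
  proof
    show "rho Z \<noteq> -\<infinity>"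
      using rho_fin Z_in_L by blast
    show "integral\<^sup>L M (excess_ret R r p) = p \<bullet> (mu - (\<chi> i. r))" for p
      by (rule integral_excess_ret[OF P R_int means])
    show "rho (excess_ret R r p) = ereal (quad_norm Sig p) * rho Z - ereal (p \<bullet> (mu - (\<chi> i. r)))" for p
      by (rule rho_excess_ret_elliptical[OF P R_ell Z_ell Sigma_pd Z_in_L L_bdd L_add L_scale L_X
            rho_cash rho_hom rho_law])
  qed (fact Sigma_pd mu_ne)+
  have "rho Z \<le> 0 \<Longrightarrow> rho Z < ereal (SR_max mu Sig r)"
    using SR_pos by (simp add: order.strict_trans1)
  then show ?thesis
    using not_rho_arbitrage_if_SR_less rho_arbitrage_if_SR_eq not_strong_rho_arbitrage_if_SR_eq
      strong_rho_arbitrage_if_SR_greater Pi_rho_nu_empty_if_negative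
    by auto
qed

end
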